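(* Let $(X,\Sigma,\mu)$ be a complete $\sigma$-finite measure space, $\mathcal{A}\subseteq\Sigma$ a sub-$\sigma$-algebra with $\mu|_{\mathcal{A}}$ $\sigma$-finite, and $E=E^{\mathcal{A}}$ the conditional expectation. Write $X=B\cup\bigcup_{n\in\mathbb{N}}A_n$, where $\{A_n\}$ is a countable family of pairwise disjoint atoms and $B$ contains no atoms. Let $\Phi,\Psi,\Theta$ be Young functions vanishing only at zero and taking only finite values, such that $\Phi(xy)\le\Psi(x)+\Theta(y)$ for all $x,y\ge0$. If $u\in L^0(\Sigma)$ induces a bounded MCE operator $EM_u:L^{\Phi}(\Sigma)\to L^{\Psi}(\Sigma)$, then (i) $E(u)=0$ $\mu$-a.e. on $B$; (ii) $\sup_{n\in\mathbb{N}} E(u)(A_n)\,\Theta^{-1}\!\left(\frac{1}{\mu(A_n)}\right)<\infty$.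
   Context: A Young function is a convex, even function $\Phi:\mathbb{R}\to[0,\infty]$ with $\Phi(0)=0$, not identically $0$ nor identically $\infty$ on $(0,\infty)$. Its generalized inverse is $\Phi^{-1}(y)=\inf\{x\ge0:\Phi(x)>y\}$. $L^{\Phi}(\Sigma)$ is the Orlicz space of $\Sigma$-measurable $f$ with $\int_X\Phi(kf)\,d\mu<\infty$ for some $k>0$, normed by $\|f\|_\Phi=\inf\{k>0:\int_X\Phi(f/k)d\mu\le1\}$. $E^{\mathcal{A}}f$ is the unique $\mathcal{A}$-measurable function with $\int_A f=\int_A E^{\mathcal{A}}f$ for all $A\in\mathcal{A}$. The MCE operator is $EM_u(f)=E(uf)$. An atom is a set $A$ with $\mu(A)>0$ such that every measurable $F\subset A$ has $\mu(F)=0$ or $\mu(F)=\mu(A)$; a measurable function $g$ is a.e. constant on an atom $A$, with value denoted $g(A)$. *)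

theory Defs
  imports "HOL-Probability.Probability"
begin

text \<open>Young function (here: real-valued, since the theorem only concerns finite-valued ones).\<close>
definition young_function :: "(real \<Rightarrow> real) \<Rightarrow> bool" where
  "young_function \<Phi> \<longleftrightarrow> convex_on UNIV \<Phi> \<and> (\<forall>x. \<Phi> (- x) = \<Phi> x) \<and> \<Phi> 0 = 0
     \<and> (\<forall>x. 0 \<le> \<Phi> x) \<and> (\<exists>x>0. \<Phi> x \<noteq> 0)"

definition young_inv :: "(real \<Rightarrow> real) \<Rightarrow> real \<Rightarrow> real" where
  "young_inv \<Phi> y = Inf {x. 0 \<le> x \<and> \<Phi> x > y}"

definition orlicz_space :: "'a measure \<Rightarrow> (real \<Rightarrow> real) \<Rightarrow> ('a \<Rightarrow> real) set" where
  "orlicz_space M \<Phi> = {f \<in> borel_measurable M.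
      \<exists>k>0. (\<integral>\<^sup>+ x. ennreal (\<Phi> (k * f x)) \<partial>M) < \<infinity>}"

definition orlicz_norm :: "'a measure \<Rightarrow> (real \<Rightarrow> real) \<Rightarrow> ('a \<Rightarrow> real) \<Rightarrow> real" where
  "orlicz_norm M \<Phi> f = Inf {k. k > 0 \<and> (\<integral>\<^sup>+ x. ennreal (\<Phi> (f x / k)) \<partial>M) \<le> 1}"

text \<open>u induces a bounded MCE operator E M_u from L^Phi to L^Psi (E = conditional
  expectation w.r.t. the sub-sigma-algebra F): E(uf) is defined (E|uf| finite a.e.) for every
  f in L^Phi, lies in L^Psi, and the operator is bounded.\<close>
definition bounded_MCE :: "'a measure \<Rightarrow> 'a measure \<Rightarrow> ('a \<Rightarrow> real)
    \<Rightarrow> (real \<Rightarrow> real) \<Rightarrow> (real \<Rightarrow> real) \<Rightarrow> bool" where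
  "bounded_MCE M F u \<Phi> \<Psi> \<longleftrightarrow>
     (\<forall>f \<in> orlicz_space M \<Phi>.
        (AE x in M. nn_cond_exp M F (\<lambda>y. ennreal \<bar>u y * f y\<bar>) x < \<infinity>)
      \<and> real_cond_exp M F (\<lambda>y. u y * f y) \<in> orlicz_space M \<Psi>)
   \<and> (\<exists>C. \<forall>f \<in> orlicz_space M \<Phi>.
        orlicz_norm M \<Psi> (real_cond_exp M F (\<lambda>y. u y * f y)) \<le> C * orlicz_norm M \<Phi> f)"

definition is_atom :: "'a measure \<Rightarrow> 'a measure \<Rightarrow> 'a set \<Rightarrow> bool" where
  "is_atom M F A \<longleftrightarrow> A \<in> sets F \<and> emeasure M A > 0 \<and>
     (\<forall>C \<in> sets F. C \<subseteq> A \<longrightarrow> emeasure M C = 0 \<or> emeasure M C = emeasure M A)"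

definition atom_value :: "'a measure \<Rightarrow> ('a \<Rightarrow> real) \<Rightarrow> 'a set \<Rightarrow> real" where
  "atom_value M g A = (SOME c. AE x in M. x \<in> A \<longrightarrow> g x = c)"

end

theory Submission
  imports Defs
begin

text \<open>
  Test EM_u on the indicator 1_S of an \<A>-set S with 0 < \<mu>(S) < \<infinity>. Since
  E(u 1_S) = 1_S E(u), suppose |E(u)| \<ge> \<delta> on S and \<Theta>(y) \<le> 1/\<mu>(S). Every k admissible
  for the Luxemburg norm of E(u 1_S) then satisfies \<Psi>(\<delta>/k) \<le> 1/\<mu>(S). So
  \<Phi>(\<delta>y/k) \<le> \<Psi>(\<delta>/k) + \<Theta>(y) \<le> 2/\<mu>(S), and by convexity 2k/(\<delta>y) is admissible for 1_S.
  Hence \<delta>y \<le> 2 \<parallel>EM_u\<parallel>. On the nonatomic part B, a set on which |E(u)| \<ge> \<delta> contains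
  \<A>-subsets of arbitrarily small positive measure. This allows arbitrarily large y, so E(u) = 0
  a.e. on B. On an atom A_n, E(u) is a.e. constant, and letting y increase towards
  \<Theta>^-1(1/\<mu>(A_n)) bounds E(u)(A_n) \<Theta>^-1(1/\<mu>(A_n)) by 2 \<parallel>EM_u\<parallel>.
\<close>

lemma young_nonneg: "young_function \<Phi> \<Longrightarrow> 0 \<le> \<Phi> x"
  unfolding young_function_def by auto

lemma young_zero: "young_function \<Phi> \<Longrightarrow> \<Phi> 0 = 0"
  unfolding young_function_def by auto

lemma young_abs: "young_function \<Phi> \<Longrightarrow> \<Phi> \<bar>x\<bar> = \<Phi> x"
  unfolding young_function_def by (cases "x \<ge> 0") auto

lemma young_scale_le:
  assumes "young_function \<Phi>" "0 \<le> t" "t \<le> 1"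
  shows "\<Phi> (t * z) \<le> t * \<Phi> z"
proof -
  have "convex_on UNIV \<Phi>" "\<Phi> 0 = 0"
    using assms(1) unfolding young_function_def by auto
  then have "\<Phi> ((1 - t) *\<^sub>R 0 + t *\<^sub>R z) \<le> (1 - t) * \<Phi> 0 + t * \<Phi> z"
    using assms(2,3) by (intro convex_onD) auto
  then show ?thesis using \<open>\<Phi> 0 = 0\<close> by simp
qed

lemma young_mono:
  assumes "young_function \<Phi>" "0 \<le> a" "a \<le> b"
  shows "\<Phi> a \<le> \<Phi> b"
proof (cases "b = 0")
  case True
  then show ?thesis using assms by simp
next
  case False
  then have "0 < b" using assms by simp
  then have "\<Phi> ((a / b) * b) \<le> (a / b) * \<Phi> b"
    using assms by (intro young_scale_le) auto
  also have "\<dots> \<le> \<Phi> b"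
    using assms \<open>0 < b\<close> young_nonneg[OF assms(1)] by (intro mult_left_le_one_le) auto
  finally show ?thesis using \<open>0 < b\<close> by simp
qed

lemma young_unbounded:
  assumes "young_function \<Phi>"
  obtains z where "0 < z" "K < \<Phi> z"
proof -
  obtain x where x: "0 < x" "\<Phi> x \<noteq> 0"
    using assms unfolding young_function_def by auto
  then have "0 < \<Phi> x" using young_nonneg[OF assms, of x] by simp
  obtain n :: nat where n: "max 1 (K / \<Phi> x) < n" using reals_Archimedean2 by blast
  have "\<Phi> ((1 / n) * (n * x)) \<le> (1 / n) * \<Phi> (n * x)"
    using n by (intro young_scale_le[OF assms]) auto
  then have "n * \<Phi> x \<le> \<Phi> (n * x)" using n by (simp add: field_simps)
  moreover have "K < n * \<Phi> x" using n \<open>0 < \<Phi> x\<close> by (simp add: field_simps)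
  ultimately show ?thesis using that[of "n * x"] x n by auto
qed

lemma young_borel_measurable:
  assumes "young_function \<Phi>"
  shows "\<Phi> \<in> borel_measurable borel"
proof -
  have "convex_on UNIV \<Phi>" using assms unfolding young_function_def by auto
  then have "continuous_on UNIV \<Phi>" by (intro convex_on_continuous) auto
  then show ?thesis by (rule borel_measurable_continuous_onI)
qed

lemma young_inv_nonneg:
  assumes "young_function \<Theta>"
  shows "0 \<le> young_inv \<Theta> t"
proof -
  obtain z where "0 < z" "t < \<Theta> z" using young_unbounded[OF assms] .
  then have "z \<in> {x. 0 \<le> x \<and> t < \<Theta> x}" by simp
  then show ?thesis unfolding young_inv_def by (intro cInf_greatest) auto
qed

lemma young_inv_le:
  assumes "0 \<le> K" and K: "\<And>w. 0 < w \<Longrightarrow> \<Theta> w \<le> t \<Longrightarrow> w \<le> K"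
  shows "young_inv \<Theta> t \<le> K"
proof (rule ccontr)
  assume "\<not> young_inv \<Theta> t \<le> K"
  then obtain w where w: "K < w" "w < young_inv \<Theta> t" using dense[of K "young_inv \<Theta> t"] by auto
  have "\<Theta> w \<le> t"
  proof (rule ccontr)
    assume "\<not> \<Theta> w \<le> t"
    then have "young_inv \<Theta> t \<le> w"
      unfolding young_inv_def using w assms(1) by (intro cInf_lower) (auto intro: bdd_belowI[of _ 0])
    with w show False by simp
  qed
  then show False using K[of w] w assms(1) by simp
qed

lemma nn_integral_young_indicator:
  assumes "young_function \<Phi>" "S \<in> sets M"
  shows "(\<integral>\<^sup>+ x. ennreal (\<Phi> (indicator S x / k)) \<partial>M) = ennreal (\<Phi> (1 / k)) * emeasure M S"
proof -
  have "(\<integral>\<^sup>+ x. ennreal (\<Phi> (indicator S x / k)) \<partial>M) = (\<integral>\<^sup>+ x. ennreal (\<Phi> (1 / k)) * indicator S x \<partial>M)"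
    using young_zero[OF assms(1)] by (intro nn_integral_cong) (auto simp: indicator_def)
  also have "\<dots> = ennreal (\<Phi> (1 / k)) * emeasure M S"
    by (rule nn_integral_cmult_indicator[OF assms(2)])
  finally show ?thesis .
qed

lemma nn_integral_young_indicator_le_1_iff:
  assumes "young_function \<Phi>" "S \<in> sets M" "emeasure M S < \<infinity>"
  shows "(\<integral>\<^sup>+ x. ennreal (\<Phi> (indicator S x / k)) \<partial>M) \<le> 1 \<longleftrightarrow> \<Phi> (1 / k) * measure M S \<le> 1"
  using assms young_nonneg[OF assms(1)]
  by (simp add: nn_integral_young_indicator emeasure_eq_ennreal_measure less_top ennreal_mult[symmetric])

lemma indicator_in_orlicz_space:
  assumes "young_function \<Phi>" "S \<in> sets M" "emeasure M S < \<infinity>"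
  shows "indicator S \<in> orlicz_space M \<Phi>"
proof -
  have "(\<integral>\<^sup>+ x. ennreal (\<Phi> (1 * indicator S x)) \<partial>M) = ennreal (\<Phi> (1 / 1)) * emeasure M S"
    using nn_integral_young_indicator[OF assms(1,2), of 1] by simp
  also have "\<dots> < \<infinity>" using assms(3) by (simp add: ennreal_mult_less_top)
  finally show ?thesis unfolding orlicz_space_def using assms(2) by (auto intro!: exI[of _ 1])
qed

lemma orlicz_space_admissible:
  assumes Y: "young_function \<Phi>" and f: "f \<in> orlicz_space M \<Phi>"
  obtains k where "0 < k" "(\<integral>\<^sup>+ x. ennreal (\<Phi> (f x / k)) \<partial>M) \<le> 1"
proof -
  from f obtain k where k: "0 < k" and fin: "(\<integral>\<^sup>+ x. ennreal (\<Phi> (k * f x)) \<partial>M) < \<infinity>"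
    and [measurable]: "f \<in> borel_measurable M"
    unfolding orlicz_space_def by auto
  have [measurable]: "\<Phi> \<in> borel_measurable borel" by (rule young_borel_measurable[OF Y])
  define r where "r = enn2real (\<integral>\<^sup>+ x. ennreal (\<Phi> (k * f x)) \<partial>M)"
  have r: "(\<integral>\<^sup>+ x. ennreal (\<Phi> (k * f x)) \<partial>M) = ennreal r" "0 \<le> r"
    using fin unfolding r_def by (auto simp: less_top)
  define l where "l = 1 / (r + 1)"
  have l: "0 < l" "l \<le> 1" using r unfolding l_def by auto
  have "(\<integral>\<^sup>+ x. ennreal (\<Phi> (f x / (1 / (l * k)))) \<partial>M) \<le> (\<integral>\<^sup>+ x. ennreal l * ennreal (\<Phi> (k * f x)) \<partial>M)"
  proof (rule nn_integral_mono)
    fix x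
    have "\<Phi> (l * (k * f x)) \<le> l * \<Phi> (k * f x)" using l by (intro young_scale_le[OF Y]) auto
    then show "ennreal (\<Phi> (f x / (1 / (l * k)))) \<le> ennreal l * ennreal (\<Phi> (k * f x))"
      using l by (simp add: ennreal_mult''[symmetric] young_nonneg[OF Y] ac_simps)
  qed
  also have "\<dots> = ennreal (l * r)"
    using r l by (simp add: nn_integral_cmult ennreal_mult)
  also have "\<dots> \<le> 1" using r unfolding l_def by (simp add: divide_le_eq)
  finally show ?thesis using l k that[of "1 / (l * k)"] by auto
qed

lemma orlicz_norm_le:
  assumes "0 < k" "(\<integral>\<^sup>+ x. ennreal (\<Phi> (f x / k)) \<partial>M) \<le> 1"
  shows "orlicz_norm M \<Phi> f \<le> k"
  unfolding orlicz_norm_def using assms by (intro cInf_lower) (auto intro: bdd_belowI[of _ 0])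

lemma orlicz_norm_greatest:
  assumes "young_function \<Phi>" "f \<in> orlicz_space M \<Phi>"
    and "\<And>k. 0 < k \<Longrightarrow> (\<integral>\<^sup>+ x. ennreal (\<Phi> (f x / k)) \<partial>M) \<le> 1 \<Longrightarrow> a \<le> k"
  shows "a \<le> orlicz_norm M \<Phi> f"
proof -
  obtain k where "0 < k" "(\<integral>\<^sup>+ x. ennreal (\<Phi> (f x / k)) \<partial>M) \<le> 1"
    using orlicz_space_admissible[OF assms(1,2)] .
  then show ?thesis unfolding orlicz_norm_def using assms(3) by (intro cInf_greatest) auto
qed

lemma orlicz_norm_indicator_pos:
  assumes Y: "young_function \<Phi>" and S: "S \<in> sets M" "0 < emeasure M S" "emeasure M S < \<infinity>"
  shows "0 < orlicz_norm M \<Phi> (indicator S)"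
proof -
  have m: "0 < measure M S" using S(2,3) by (simp add: emeasure_eq_ennreal_measure less_top)
  obtain z where z: "0 < z" "1 / measure M S < \<Phi> z" using young_unbounded[OF Y] .
  have "1 / z \<le> orlicz_norm M \<Phi> (indicator S)"
  proof (rule orlicz_norm_greatest[OF Y indicator_in_orlicz_space[OF Y S(1,3)]])
    fix k assume k: "0 < k" "(\<integral>\<^sup>+ x. ennreal (\<Phi> (indicator S x / k)) \<partial>M) \<le> 1"
    then have "\<Phi> (1 / k) * measure M S \<le> 1"
      using nn_integral_young_indicator_le_1_iff[OF Y S(1,3)] by simp
    also have "1 < \<Phi> z * measure M S" using z m by (simp add: field_simps)
    finally have "\<Phi> (1 / k) < \<Phi> z" by (rule mult_right_less_imp_less) (use m in simp)
    then have "1 / k < z" using young_mono[OF Y, of z "1 / k"] z by force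
    then show "1 / z \<le> k" using k z by (simp add: field_simps)
  qed
  then show ?thesis using z(1) by (meson less_le_trans zero_less_divide_1_iff)
qed

lemma young_level_set_measure_le:
  assumes Y: "young_function \<Psi>" and S: "S \<in> sets M" "emeasure M S < \<infinity>"
    and "0 \<le> \<delta>" "0 < k" and h: "AE x in M. x \<in> S \<longrightarrow> \<delta> \<le> \<bar>h x\<bar>"
    and modular: "(\<integral>\<^sup>+ x. ennreal (\<Psi> (h x / k)) \<partial>M) \<le> 1"
  shows "\<Psi> (\<delta> / k) * measure M S \<le> 1"
proof -
  have "ennreal (\<Psi> (\<delta> / k) * measure M S) = (\<integral>\<^sup>+ x. ennreal (\<Psi> (\<delta> / k)) * indicator S x \<partial>M)"
    using S young_nonneg[OF Y]
    by (simp add: nn_integral_cmult_indicator emeasure_eq_ennreal_measure less_top ennreal_mult)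
  also have "\<dots> \<le> (\<integral>\<^sup>+ x. ennreal (\<Psi> (h x / k)) \<partial>M)"
  proof (rule nn_integral_mono_AE)
    show "AE x in M. ennreal (\<Psi> (\<delta> / k)) * indicator S x \<le> ennreal (\<Psi> (h x / k))"
      using h
    proof eventually_elim
      case (elim x)
      have "\<Psi> (\<delta> / k) \<le> \<Psi> (h x / k)" if "x \<in> S"
      proof -
        have "\<Psi> (\<delta> / k) \<le> \<Psi> \<bar>h x / k\<bar>"
          using elim that assms(4,5) by (intro young_mono[OF Y]) (auto simp: divide_right_mono)
        then show ?thesis by (simp only: young_abs[OF Y])
      qed
      then show ?case by (auto simp: indicator_def ennreal_leI)
    qed
  qed
  also have "\<dots> \<le> 1" by (rule modular)
  finally show ?thesis by simp
qed

lemma orlicz_norm_indicator_le_admissible: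
  assumes young: "young_function \<Phi>" "young_function \<Psi>"
    and ineq: "\<And>x y. 0 \<le> x \<Longrightarrow> 0 \<le> y \<Longrightarrow> \<Phi> (x * y) \<le> \<Psi> x + \<Theta> y"
    and S: "S \<in> sets M" "emeasure M S < \<infinity>" and h: "AE x in M. x \<in> S \<longrightarrow> \<delta> \<le> \<bar>h x\<bar>"
    and \<delta>: "0 < \<delta>" and y: "0 < y" "\<Theta> y \<le> 1 / measure M S"
    and k: "0 < k" "(\<integral>\<^sup>+ x. ennreal (\<Psi> (h x / k)) \<partial>M) \<le> 1"
  shows "orlicz_norm M \<Phi> (indicator S) \<le> 2 * k / (\<delta> * y)"
proof -
  define m where "m = measure M S"
  have m: "0 \<le> m" unfolding m_def by simp
  have "\<Psi> (\<delta> / k) * m \<le> 1"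
    unfolding m_def using young_level_set_measure_le[OF young(2) S _ k(1) h k(2)] \<delta> by simp
  moreover have "\<Theta> y * m \<le> 1"
  proof (cases "m = 0")
    case False
    with m have "0 < m" by simp
    with y(2) show ?thesis by (simp add: m_def le_divide_eq)
  qed simp
  moreover have "\<Phi> (\<delta> / k * y) * m \<le> (\<Psi> (\<delta> / k) + \<Theta> y) * m"
    using ineq[of "\<delta> / k" y] \<delta> k y m by (intro mult_right_mono) auto
  ultimately have "\<Phi> (\<delta> / k * y) * m \<le> 2" by (simp add: distrib_right)
  have "\<Phi> ((1 / 2) * (\<delta> / k * y)) * m \<le> (1 / 2) * \<Phi> (\<delta> / k * y) * m"
    using m by (intro mult_right_mono young_scale_le[OF young(1)]) auto
  also have "\<dots> \<le> 1" using \<open>\<Phi> (\<delta> / k * y) * m \<le> 2\<close> by simp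
  also have "(1 / 2) * (\<delta> / k * y) = 1 / (2 * k / (\<delta> * y))" by simp
  finally have "\<Phi> (1 / (2 * k / (\<delta> * y))) * m \<le> 1" .
  then have "(\<integral>\<^sup>+ x. ennreal (\<Phi> (indicator S x / (2 * k / (\<delta> * y)))) \<partial>M) \<le> 1"
    unfolding nn_integral_young_indicator_le_1_iff[OF young(1) S] m_def .
  then show ?thesis using \<delta> k y by (intro orlicz_norm_le) auto
qed

lemma orlicz_norm_indicator_mult_le:
  assumes young: "young_function \<Phi>" "young_function \<Psi>"
    and ineq: "\<And>x y. 0 \<le> x \<Longrightarrow> 0 \<le> y \<Longrightarrow> \<Phi> (x * y) \<le> \<Psi> x + \<Theta> y"
    and S: "S \<in> sets M" "emeasure M S < \<infinity>"
    and h: "h \<in> orlicz_space M \<Psi>" "AE x in M. x \<in> S \<longrightarrow> \<delta> \<le> \<bar>h x\<bar>"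
    and \<delta>: "0 < \<delta>" and y: "0 < y" "\<Theta> y \<le> 1 / measure M S"
  shows "\<delta> * y * orlicz_norm M \<Phi> (indicator S) \<le> 2 * orlicz_norm M \<Psi> h"
proof -
  have "\<delta> * y * orlicz_norm M \<Phi> (indicator S) / 2 \<le> orlicz_norm M \<Psi> h"
  proof (rule orlicz_norm_greatest[OF young(2) h(1)])
    fix k assume "0 < k" "(\<integral>\<^sup>+ x. ennreal (\<Psi> (h x / k)) \<partial>M) \<le> 1"
    then have "orlicz_norm M \<Phi> (indicator S) \<le> 2 * k / (\<delta> * y)"
      using orlicz_norm_indicator_le_admissible[OF young ineq S h(2) \<delta> y] by blast
    then have "orlicz_norm M \<Phi> (indicator S) * (\<delta> * y) \<le> 2 * k"
      using \<delta> y by (simp add: pos_le_divide_eq)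
    then show "\<delta> * y * orlicz_norm M \<Phi> (indicator S) / 2 \<le> k"
      by (simp add: mult.commute)
  qed
  then show ?thesis by simp
qed

lemma real_cond_exp_indicator_mult:
  assumes "sigma_finite_subalgebra M F" and S: "S \<in> sets F"
    and [measurable]: "u \<in> borel_measurable M"
  shows "AE x in M. real_cond_exp M F (\<lambda>y. u y * indicator S y) x = indicator S x * real_cond_exp M F u x"
proof -
  interpret sigma_finite_subalgebra M F by fact
  have [measurable]: "(\<lambda>x. indicator S x :: ennreal) \<in> borel_measurable F" using S by measurable
  have pos: "(\<lambda>y. ennreal (u y * indicator S y)) = (\<lambda>x. indicator S x * ennreal (u x))"
    and neg: "(\<lambda>y. ennreal (- (u y * indicator S y))) = (\<lambda>x. indicator S x * ennreal (- u x))"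
    by (auto simp: indicator_def)
  have "AE x in M. indicator S x * nn_cond_exp M F (\<lambda>x. ennreal (u x)) x
      = nn_cond_exp M F (\<lambda>x. indicator S x * ennreal (u x)) x"
    by (rule nn_cond_exp_prod) measurable
  moreover have "AE x in M. indicator S x * nn_cond_exp M F (\<lambda>x. ennreal (- u x)) x
      = nn_cond_exp M F (\<lambda>x. indicator S x * ennreal (- u x)) x"
    by (rule nn_cond_exp_prod) measurable
  ultimately show ?thesis
  proof eventually_elim
    case (elim x)
    show ?case unfolding real_cond_exp_def pos neg elim(1)[symmetric] elim(2)[symmetric]
      by (cases "x \<in> S") auto
  qed
qed

lemma (in sigma_finite_subalgebra) countable_finite_cover:
  obtains W where "countable W" "W \<subseteq> sets F" "\<Union>W = space M" "\<And>a. a \<in> W \<Longrightarrow> emeasure M a < \<infinity>"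
proof -
  obtain W where W: "countable W" "W \<subseteq> sets (restr_to_subalg M F)" "\<Union>W = space (restr_to_subalg M F)"
      "\<forall>a\<in>W. emeasure (restr_to_subalg M F) a \<noteq> \<infinity>"
    using sigma_finite_measure.sigma_finite_countable[OF sigma_fin_subalg] by blast
  have "W \<subseteq> sets F" using W(2) sets_restr_to_subalg[OF subalg] by simp
  moreover have "emeasure M a < \<infinity>" if "a \<in> W" for a
  proof -
    have "a \<in> sets F" using that \<open>W \<subseteq> sets F\<close> by blast
    moreover have "emeasure (restr_to_subalg M F) a \<noteq> \<infinity>" using W(4) that by blast
    ultimately show ?thesis by (simp add: emeasure_restr_to_subalg[OF subalg] less_top)
  qed
  ultimately show ?thesis using that W(1,3) unfolding space_restr_to_subalg by blast
qed

lemma atom_sets: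
  assumes "subalgebra M F" "is_atom M F A"
  shows "A \<in> sets F" "A \<in> sets M"
  using assms unfolding is_atom_def subalgebra_def by auto

lemma atom_not_AE_notin:
  assumes "subalgebra M F" "is_atom M F A"
  shows "\<not> (AE x in M. x \<notin> A)"
  using assms atom_sets[OF assms] by (auto simp: is_atom_def AE_iff_null_sets[symmetric])

lemma (in sigma_finite_subalgebra) atom_finite:
  assumes A: "is_atom M F A"
  shows "emeasure M A < \<infinity>"
proof -
  have FM: "sets F \<subseteq> sets M" using subalg by (auto simp: subalgebra_def)
  obtain W where W: "countable W" "W \<subseteq> sets F" "\<Union>W = space M" "\<And>a. a \<in> W \<Longrightarrow> emeasure M a < \<infinity>"
    using countable_finite_cover by blast
  have "\<exists>a\<in>W. emeasure M (A \<inter> a) \<noteq> 0"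
  proof (rule ccontr)
    assume "\<not> ?thesis"
    then have "AE x in M. x \<notin> A \<inter> a" if "a \<in> W" for a
      using that W(2) FM atom_sets[OF subalg A] by (intro AE_not_in null_setsI) auto
    then have "AE x in M. \<forall>a\<in>W. x \<notin> A \<inter> a"
      using W(1) by (rule AE_ball_countable')
    then have "AE x in M. x \<notin> A"
      using AE_space by eventually_elim (use W(3) in blast)
    then show False using atom_not_AE_notin[OF subalg A] by blast
  qed
  then obtain a where a: "a \<in> W" "emeasure M (A \<inter> a) \<noteq> 0" by blast
  moreover have "A \<inter> a \<in> sets F" using a(1) W(2) atom_sets[OF subalg A] by auto
  ultimately have "emeasure M A = emeasure M (A \<inter> a)"
    using A unfolding is_atom_def by auto
  also have "\<dots> \<le> emeasure M a"
    using a(1) W(2) FM by (intro emeasure_mono) auto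
  also have "\<dots> < \<infinity>" using W(4)[OF a(1)] .
  finally show ?thesis .
qed

lemma atom_AE_le_or_gt:
  fixes g :: "'a \<Rightarrow> real"
  assumes sub: "subalgebra M F" and A: "is_atom M F A" "emeasure M A < \<infinity>"
    and g: "g \<in> borel_measurable F"
  shows "(AE x in M. x \<in> A \<longrightarrow> g x \<le> r) \<or> (AE x in M. x \<in> A \<longrightarrow> r < g x)"
proof -
  have AF: "A \<in> sets F" and AM: "A \<in> sets M" using atom_sets[OF sub A(1)] .
  define C where "C = A \<inter> {x \<in> space F. g x \<le> r}"
  have CF: "C \<in> sets F" unfolding C_def using AF g by measurable
  then have CM: "C \<in> sets M" using sub by (auto simp: subalgebra_def)
  have "emeasure M C = 0 \<or> emeasure M C = emeasure M A"
    using A(1) CF unfolding is_atom_def C_def by auto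
  then show ?thesis
  proof
    assume "emeasure M C = 0"
    then have "AE x in M. x \<notin> C" using CM by (intro AE_not_in null_setsI)
    with AE_space have "AE x in M. x \<in> A \<longrightarrow> r < g x"
      by eventually_elim (use sub in \<open>auto simp: C_def subalgebra_def\<close>)
    then show ?thesis ..
  next
    assume "emeasure M C = emeasure M A"
    then have "emeasure M (A - C) = 0"
      using A(2) AM CM by (subst emeasure_Diff) (auto simp: C_def)
    then have "AE x in M. x \<notin> A - C" using AM CM by (intro AE_not_in null_setsI) auto
    with AE_space have "AE x in M. x \<in> A \<longrightarrow> g x \<le> r"
      by eventually_elim (use sub in \<open>auto simp: C_def subalgebra_def\<close>)
    then show ?thesis ..
  qed
qed

lemma atom_AE_bounded_above:
  fixes g :: "'a \<Rightarrow> real"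
  assumes sub: "subalgebra M F" and A: "is_atom M F A" "emeasure M A < \<infinity>"
    and g: "g \<in> borel_measurable F"
  obtains r where "AE x in M. x \<in> A \<longrightarrow> g x \<le> r"
proof (rule ccontr)
  assume "\<not> thesis"
  then have "AE x in M. x \<in> A \<longrightarrow> real n < g x" for n :: nat
    using atom_AE_le_or_gt[OF assms, of "real n"] that by blast
  then have "AE x in M. \<forall>n::nat. x \<in> A \<longrightarrow> real n < g x"
    unfolding AE_all_countable by blast
  then have "AE x in M. x \<notin> A"
    by eventually_elim (meson reals_Archimedean2 less_asym)
  then show False using atom_not_AE_notin[OF sub A(1)] by blast
qed

lemma atom_AE_upper_bounds:
  fixes g :: "'a \<Rightarrow> real"
  assumes sub: "subalgebra M F" and A: "is_atom M F A" "emeasure M A < \<infinity>"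
    and g: "g \<in> borel_measurable F"
  shows "{r. AE x in M. x \<in> A \<longrightarrow> g x \<le> r} \<noteq> {}"
    and "bdd_below {r. AE x in M. x \<in> A \<longrightarrow> g x \<le> r}"
proof -
  show "{r. AE x in M. x \<in> A \<longrightarrow> g x \<le> r} \<noteq> {}"
    using atom_AE_bounded_above[OF assms] by blast
  obtain a where a: "AE x in M. x \<in> A \<longrightarrow> - g x \<le> a"
    using atom_AE_bounded_above[OF sub A, of "\<lambda>x. - g x"] g by auto
  show "bdd_below {r. AE x in M. x \<in> A \<longrightarrow> g x \<le> r}"
  proof (rule bdd_belowI)
    fix t assume t: "t \<in> {r. AE x in M. x \<in> A \<longrightarrow> g x \<le> r}"
    show "- a \<le> t"
    proof (rule ccontr)
      assume "\<not> - a \<le> t"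
      from a t have "AE x in M. x \<notin> A"
        unfolding mem_Collect_eq by eventually_elim (use \<open>\<not> - a \<le> t\<close> in auto)
      then show False using atom_not_AE_notin[OF sub A(1)] by blast
    qed
  qed
qed

lemma atom_AE_const:
  fixes g :: "'a \<Rightarrow> real"
  assumes sub: "subalgebra M F" and A: "is_atom M F A" "emeasure M A < \<infinity>"
    and g: "g \<in> borel_measurable F"
  shows "\<exists>c. AE x in M. x \<in> A \<longrightarrow> g x = c"
proof -
  define T where "T = {r. AE x in M. x \<in> A \<longrightarrow> g x \<le> r}"
  define c where "c = Inf T"
  have T: "T \<noteq> {}" "bdd_below T" using atom_AE_upper_bounds[OF assms] unfolding T_def by auto
  have upper: "AE x in M. x \<in> A \<longrightarrow> g x \<le> c"
  proof -
    have "c + inverse (Suc n) \<in> T" for n :: nat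
    proof -
      obtain r where "r \<in> T" "r < c + inverse (Suc n)"
        using cInf_less_iff[OF T, of "c + inverse (Suc n)"] unfolding c_def by auto
      then show ?thesis unfolding T_def by (auto elim: AE_mp)
    qed
    then have "AE x in M. \<forall>n::nat. x \<in> A \<longrightarrow> g x \<le> c + inverse (Suc n)"
      unfolding T_def AE_all_countable by blast
    then show ?thesis
      by eventually_elim (blast intro: LIMSEQ_le_const[OF LIMSEQ_inverse_real_of_nat_add])
  qed
  have lower: "AE x in M. x \<in> A \<longrightarrow> c \<le> g x"
  proof -
    have "c + - inverse (Suc n) \<notin> T" for n :: nat
      using cInf_lower[OF _ T(2), of "c + - inverse (Suc n)"] unfolding c_def by force
    then have "AE x in M. \<forall>n::nat. x \<in> A \<longrightarrow> c + - inverse (Suc n) < g x"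
      using atom_AE_le_or_gt[OF assms] unfolding T_def AE_all_countable by blast
    then show ?thesis
      by eventually_elim (blast intro: LIMSEQ_le_const2[OF LIMSEQ_inverse_real_of_nat_add_minus] less_imp_le)
  qed
  from upper lower have "AE x in M. x \<in> A \<longrightarrow> g x = c" by eventually_elim auto
  then show ?thesis ..
qed

lemma nonatomic_halve:
  assumes sub: "subalgebra M F" and S: "S \<in> sets F" "0 < measure M S" "emeasure M S < \<infinity>"
    and nonatomic: "\<not> is_atom M F S"
  obtains S' where "S' \<in> sets F" "S' \<subseteq> S" "0 < measure M S'" "measure M S' \<le> measure M S / 2"
proof -
  have FM: "sets F \<subseteq> sets M" using sub by (auto simp: subalgebra_def)
  have em: "emeasure M D = ennreal (measure M D)" if "D \<in> sets F" "D \<subseteq> S" for D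
    using emeasure_mono[of D S M] that S FM by (intro emeasure_eq_ennreal_measure) (auto simp: top_unique)
  have "0 < emeasure M S" using em[of S] S by simp
  then obtain D where D: "D \<in> sets F" "D \<subseteq> S" "emeasure M D \<noteq> 0" "emeasure M D \<noteq> emeasure M S"
    using nonatomic S(1) unfolding is_atom_def by auto
  then have D_pos: "0 < measure M D" and D_ne: "measure M D \<noteq> measure M S"
    using em[OF D(1,2)] em[of S] S(1) measure_nonneg[of M D] by (auto simp: less_le)
  have D_le: "measure M D \<le> measure M S"
    using D S FM by (intro measure_mono_fmeasurable) (auto simp: fmeasurable_def)
  show ?thesis
  proof (cases "measure M D \<le> measure M S / 2")
    case True
    then show ?thesis using that D(1,2) D_pos by blast
  next
    case False
    have "measure M (S - D) = measure M S - measure M D"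
      using D S FM by (intro measure_Diff) (auto simp: less_top)
    moreover have "S - D \<in> sets F" using D S by auto
    ultimately show ?thesis using that[of "S - D"] False D_le D_ne by auto
  qed
qed

lemma nonatomic_small_subset:
  assumes sub: "subalgebra M F" and nonatomic: "\<And>C. C \<subseteq> S \<Longrightarrow> \<not> is_atom M F C"
    and S: "S \<in> sets F" "0 < measure M S" "emeasure M S < \<infinity>" and "0 < \<epsilon>"
  obtains S' where "S' \<in> sets F" "S' \<subseteq> S" "0 < measure M S'" "measure M S' \<le> \<epsilon>"
proof -
  have FM: "sets F \<subseteq> sets M" using sub by (auto simp: subalgebra_def)
  have "\<exists>S'\<in>sets F. S' \<subseteq> S \<and> 0 < measure M S' \<and> measure M S' \<le> measure M S / 2 ^ n" for n
  proof (induction n)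
    case 0
    then show ?case using S by auto
  next
    case (Suc n)
    then obtain S' where S': "S' \<in> sets F" "S' \<subseteq> S" "0 < measure M S'"
      "measure M S' \<le> measure M S / 2 ^ n" by blast
    have "emeasure M S' < \<infinity>"
      using emeasure_mono[of S' S M] S' S FM by (auto simp: top_unique less_top)
    then obtain S'' where "S'' \<in> sets F" "S'' \<subseteq> S'" "0 < measure M S''" "measure M S'' \<le> measure M S' / 2"
      using nonatomic_halve[OF sub S'(1,3)] nonatomic S'(2) by blast
    then show ?case using S' by (intro bexI[of _ S'']) auto
  qed
  moreover obtain n :: nat where "measure M S / \<epsilon> < 2 ^ n" using real_arch_pow[of 2] by auto
  then have "measure M S / 2 ^ n \<le> \<epsilon>" using \<open>0 < \<epsilon>\<close> by (simp add: field_simps)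
  ultimately show ?thesis using that order_trans by blast
qed

lemma (in sigma_finite_subalgebra) AE_zero_if_level_sets_null:
  fixes g :: "'a \<Rightarrow> real"
  assumes g: "g \<in> borel_measurable F" and B: "B \<in> sets F"
    and null: "\<And>S \<delta>. S \<in> sets F \<Longrightarrow> S \<subseteq> B \<Longrightarrow> emeasure M S < \<infinity> \<Longrightarrow> 0 < \<delta> \<Longrightarrow>
      (\<And>x. x \<in> S \<Longrightarrow> \<delta> \<le> \<bar>g x\<bar>) \<Longrightarrow> emeasure M S = 0"
  shows "AE x in M. x \<in> B \<longrightarrow> g x = 0"
proof -
  have FM: "sets F \<subseteq> sets M" and sp: "space F = space M" using subalg by (auto simp: subalgebra_def)
  obtain W where W: "countable W" "W \<subseteq> sets F" "\<Union>W = space M" "\<And>a. a \<in> W \<Longrightarrow> emeasure M a < \<infinity>"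
    using countable_finite_cover by blast
  define Q where "Q n a = a \<inter> B \<inter> {x \<in> space F. 1 / Suc n \<le> \<bar>g x\<bar>}" for n :: nat and a
  have Q_null: "AE x in M. x \<notin> Q n a" if "a \<in> W" for n a
  proof -
    have "{x \<in> space F. 1 / Suc n \<le> \<bar>g x\<bar>} \<in> sets F" using g by measurable
    then have QF: "Q n a \<in> sets F" unfolding Q_def using that W(2) B by auto
    have "emeasure M (Q n a) \<le> emeasure M a"
      using that W(2) FM by (intro emeasure_mono) (auto simp: Q_def)
    then have "emeasure M (Q n a) < \<infinity>" using W(4)[OF that] by simp
    then show ?thesis
      using null[OF QF, of "1 / Suc n"] QF FM by (intro AE_not_in null_setsI) (auto simp: Q_def)
  qed
  have "AE x in M. \<forall>a\<in>W. x \<notin> Q n a" for n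
    using Q_null[of _ n] W(1) by (rule AE_ball_countable')
  then have "AE x in M. \<forall>n. \<forall>a\<in>W. x \<notin> Q n a"
    unfolding AE_all_countable by blast
  then show ?thesis
    using AE_space
  proof eventually_elim
    case (elim x)
    then obtain a where "a \<in> W" "x \<in> a" using W(3) by blast
    show ?case
    proof (rule ccontr)
      assume "\<not> ?case"
      then obtain n :: nat where "1 / Suc n < \<bar>g x\<bar>" using nat_approx_posE[of "\<bar>g x\<bar>"] by auto
      then have "x \<in> Q n a" using \<open>x \<in> a\<close> \<open>\<not> ?case\<close> elim(2) unfolding Q_def sp by auto
      then show False using elim(1) \<open>a \<in> W\<close> by blast
    qed
  qed
qed

definition level_bounded :: "'a measure \<Rightarrow> 'a measure \<Rightarrow> (real \<Rightarrow> real) \<Rightarrow> ('a \<Rightarrow> real) \<Rightarrow> real \<Rightarrow> bool" where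
  "level_bounded M F \<Theta> g C \<longleftrightarrow>
    (\<forall>S \<delta> y. S \<in> sets F \<longrightarrow> 0 < measure M S \<longrightarrow> emeasure M S < \<infinity> \<longrightarrow> 0 < \<delta> \<longrightarrow> 0 < y
      \<longrightarrow> \<Theta> y \<le> 1 / measure M S \<longrightarrow> (AE x in M. x \<in> S \<longrightarrow> \<delta> \<le> \<bar>g x\<bar>) \<longrightarrow> \<delta> * y \<le> C)"

lemma level_boundedD:
  assumes "level_bounded M F \<Theta> g C" "S \<in> sets F" "0 < measure M S" "emeasure M S < \<infinity>"
    "0 < \<delta>" "0 < y" "\<Theta> y \<le> 1 / measure M S" "AE x in M. x \<in> S \<longrightarrow> \<delta> \<le> \<bar>g x\<bar>"
  shows "\<delta> * y \<le> C"
  using assms unfolding level_bounded_def by blast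

lemma bounded_MCE_level_bounded:
  assumes sf: "sigma_finite_subalgebra M F"
    and young: "young_function \<Phi>" "young_function \<Psi>"
    and ineq: "\<And>x y. 0 \<le> x \<Longrightarrow> 0 \<le> y \<Longrightarrow> \<Phi> (x * y) \<le> \<Psi> x + \<Theta> y"
    and u: "u \<in> borel_measurable M" and bdd: "bounded_MCE M F u \<Phi> \<Psi>"
  obtains C where "level_bounded M F \<Theta> (real_cond_exp M F u) C"
proof -
  interpret sigma_finite_subalgebra M F by (rule sf)
  obtain C where C: "\<And>f. f \<in> orlicz_space M \<Phi> \<Longrightarrow>
      orlicz_norm M \<Psi> (real_cond_exp M F (\<lambda>y. u y * f y)) \<le> C * orlicz_norm M \<Phi> f"
    using bdd unfolding bounded_MCE_def by blast
  have into: "\<And>f. f \<in> orlicz_space M \<Phi> \<Longrightarrow> real_cond_exp M F (\<lambda>y. u y * f y) \<in> orlicz_space M \<Psi>"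
    using bdd unfolding bounded_MCE_def by blast
  have "\<delta> * y \<le> 2 * C"
    if S: "S \<in> sets F" "0 < measure M S" "emeasure M S < \<infinity>" and \<delta>: "0 < \<delta>"
      and y: "0 < y" "\<Theta> y \<le> 1 / measure M S" and level: "AE x in M. x \<in> S \<longrightarrow> \<delta> \<le> \<bar>real_cond_exp M F u x\<bar>"
    for S \<delta> y
  proof -
    have SM: "S \<in> sets M" using S(1) subalg by (auto simp: subalgebra_def)
    have "0 < emeasure M S" using S by (simp add: emeasure_eq_ennreal_measure less_top)
    have ind: "indicator S \<in> orlicz_space M \<Phi>" by (rule indicator_in_orlicz_space[OF young(1) SM S(3)])
    define h where "h = real_cond_exp M F (\<lambda>y. u y * indicator S y)"
    have "AE x in M. x \<in> S \<longrightarrow> \<delta> \<le> \<bar>h x\<bar>"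
      using real_cond_exp_indicator_mult[OF sf S(1) u] level unfolding h_def by eventually_elim auto
    then have "\<delta> * y * orlicz_norm M \<Phi> (indicator S) \<le> 2 * orlicz_norm M \<Psi> h"
      using orlicz_norm_indicator_mult_le[OF young ineq SM S(3) into[OF ind] _ \<delta> y]
      unfolding h_def by blast
    also have "\<dots> \<le> 2 * C * orlicz_norm M \<Phi> (indicator S)" using C[OF ind] unfolding h_def by simp
    finally show ?thesis
      using orlicz_norm_indicator_pos[OF young(1) SM \<open>0 < emeasure M S\<close> S(3)]
      by (rule mult_right_le_imp_le)
  qed
  then show ?thesis using that[of "2 * C"] unfolding level_bounded_def by blast
qed

lemma (in sigma_finite_subalgebra) level_bounded_AE_zero_on_nonatomic:
  fixes g :: "'a \<Rightarrow> real"
  assumes bound: "level_bounded M F \<Theta> g C" and g: "g \<in> borel_measurable F"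
    and B: "B \<in> sets F" and nonatomic: "\<And>D. D \<subseteq> B \<Longrightarrow> \<not> is_atom M F D"
  shows "AE x in M. x \<in> B \<longrightarrow> g x = 0"
proof (rule AE_zero_if_level_sets_null[OF g B])
  fix S0 \<delta> assume S0: "S0 \<in> sets F" "S0 \<subseteq> B" "emeasure M S0 < \<infinity>"
    and \<delta>: "0 < \<delta>" "\<And>x. x \<in> S0 \<Longrightarrow> \<delta> \<le> \<bar>g x\<bar>"
  show "emeasure M S0 = 0"
  proof (rule ccontr)
    assume "emeasure M S0 \<noteq> 0"
    then have "measure M S0 \<noteq> 0" using S0(3) by (simp add: emeasure_eq_ennreal_measure less_top)
    then have "0 < measure M S0" using measure_nonneg[of M S0] by linarith
    define y where "y = (\<bar>C\<bar> + 1) / \<delta>"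
    have "0 < 1 / (\<bar>\<Theta> y\<bar> + 1)" using abs_ge_zero[of "\<Theta> y"] by simp
    moreover have "\<And>D. D \<subseteq> S0 \<Longrightarrow> \<not> is_atom M F D" using nonatomic S0(2) by blast
    ultimately obtain S where S: "S \<in> sets F" "S \<subseteq> S0" "0 < measure M S"
        "measure M S \<le> 1 / (\<bar>\<Theta> y\<bar> + 1)"
      using nonatomic_small_subset[OF subalg _ S0(1) \<open>0 < measure M S0\<close> S0(3)] by blast
    have "emeasure M S < \<infinity>"
      using emeasure_mono[of S S0 M] S S0 subalg by (auto simp: subalgebra_def top_unique less_top)
    moreover have "\<bar>\<Theta> y\<bar> + 1 \<le> 1 / measure M S" using S(3,4) by (simp add: field_simps)
    then have "\<Theta> y \<le> 1 / measure M S" by simp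
    moreover have "AE x in M. x \<in> S \<longrightarrow> \<delta> \<le> \<bar>g x\<bar>" using S(2) \<delta>(2) by auto
    moreover have "0 < y" unfolding y_def using \<delta>(1) by simp
    ultimately have "\<delta> * y \<le> C" using level_boundedD[OF bound S(1,3)] \<delta>(1) by blast
    then show False using \<delta>(1) unfolding y_def by simp
  qed
qed

lemma (in sigma_finite_subalgebra) level_bounded_atom_value:
  fixes g :: "'a \<Rightarrow> real"
  assumes bound: "level_bounded M F \<Theta> g C" and young: "young_function \<Theta>"
    and g: "g \<in> borel_measurable F" and A: "is_atom M F A"
  shows "atom_value M g A * young_inv \<Theta> (1 / measure M A) \<le> max 0 C"
proof -
  have fin: "emeasure M A < \<infinity>" by (rule atom_finite[OF A])
  have pos: "0 < measure M A"
    using A fin by (auto simp: is_atom_def emeasure_eq_ennreal_measure less_top)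
  define c where "c = atom_value M g A"
  have const: "AE x in M. x \<in> A \<longrightarrow> g x = c"
    unfolding c_def atom_value_def using atom_AE_const[OF subalg A fin g] by (rule someI_ex)
  show ?thesis
  proof (cases "c \<le> 0")
    case True
    then have "c * young_inv \<Theta> (1 / measure M A) \<le> 0"
      using young_inv_nonneg[OF young] by (intro mult_nonpos_nonneg)
    then show ?thesis unfolding c_def by simp
  next
    case False
    have "young_inv \<Theta> (1 / measure M A) \<le> max 0 C / c"
    proof (rule young_inv_le)
      fix w assume "0 < w" "\<Theta> w \<le> 1 / measure M A"
      moreover have "AE x in M. x \<in> A \<longrightarrow> c \<le> \<bar>g x\<bar>" using const by eventually_elim auto
      ultimately have "c * w \<le> C"
        using level_boundedD[OF bound atom_sets(1)[OF subalg A] pos fin] False by simp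
      then show "w \<le> max 0 C / c" using False by (simp add: field_simps)
    qed (use False in simp)
    then show ?thesis using False by (simp add: c_def[symmetric] field_simps)
  qed
qed

theorem theorem3p3:
  fixes M F :: "'a measure" and u :: "'a \<Rightarrow> real"
    and \<Phi> \<Psi> \<Theta> :: "real \<Rightarrow> real"
    and B :: "'a set" and I :: "nat set" and A :: "nat \<Rightarrow> 'a set"
  assumes complete: "complete_measure M"
    and sfin: "sigma_finite_measure M"
    and subalg: "sigma_finite_subalgebra M F"
    and atoms: "\<And>n. n \<in> I \<Longrightarrow> is_atom M F (A n)"
    and disj: "disjoint_family_on A I"
    and B_sets: "B \<in> sets F"
    and decomp: "space M = B \<union> (\<Union>n\<in>I. A n)"
    and B_nonatomic: "\<not> (\<exists>C. C \<subseteq> B \<and> is_atom M F C)"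
    and young: "young_function \<Phi>" "young_function \<Psi>" "young_function \<Theta>"
    and zero_only: "\<And>x. \<Phi> x = 0 \<longleftrightarrow> x = 0" "\<And>x. \<Psi> x = 0 \<longleftrightarrow> x = 0"
                   "\<And>x. \<Theta> x = 0 \<longleftrightarrow> x = 0"
    and ineq: "\<And>x y. 0 \<le> x \<Longrightarrow> 0 \<le> y \<Longrightarrow> \<Phi> (x * y) \<le> \<Psi> x + \<Theta> y"
    and u_meas: "u \<in> borel_measurable M"
    and bdd: "bounded_MCE M F u \<Phi> \<Psi>"
  shows "(AE x in M. x \<in> B \<longrightarrow> real_cond_exp M F u x = 0)
    \<and> bdd_above ((\<lambda>n. atom_value M (real_cond_exp M F u) (A n)
                      * young_inv \<Theta> (1 / measure M (A n))) ` I)"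
proof -
  obtain C where C: "level_bounded M F \<Theta> (real_cond_exp M F u) C"
    using bounded_MCE_level_bounded[OF subalg young(1,2) ineq u_meas bdd] .
  have "AE x in M. x \<in> B \<longrightarrow> real_cond_exp M F u x = 0"
    using B_nonatomic
    by (intro sigma_finite_subalgebra.level_bounded_AE_zero_on_nonatomic[OF subalg C _ B_sets]) auto
  moreover have "bdd_above ((\<lambda>n. atom_value M (real_cond_exp M F u) (A n)
      * young_inv \<Theta> (1 / measure M (A n))) ` I)"
    using sigma_finite_subalgebra.level_bounded_atom_value[OF subalg C young(3) _ atoms]
    by (intro bdd_aboveI2) auto
  ultimately show ?thesis ..
qed

end
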